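(* $\displaystyle\lim_{n\to\infty}\frac{l(4n+2)}{l(4n+1)}=\frac{17}{5}.$
   Context: For $n\ge 0$, $c(n)=\sum_{i=0}^{n}\left(\binom{n}{i}\bmod 2\right)2^{i}$, the integer whose binary digits form the $n$-th row of Pascal's triangle modulo $2$; one has $c(2n)\equiv1\pmod4$, and $l(n)=\frac{c(2n)-1}{4}$. (Stated in the paper as a conjecture of R. Stephan and proved there.) *)

theory Defs
  imports Complex_Main
begin

definition c :: "nat \<Rightarrow> nat" where
  "c n = (\<Sum>i = 0..n. ((n choose i) mod 2) * 2 ^ i)"

text \<open>l n = (c(2n) - 1)/4; since c(2n) = 1 mod 4, the division is exact.\<close>
definition l :: "nat \<Rightarrow> nat" where
  "l n = (c (2 * n) - 1) div 4"

end

theory Submission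
  imports Defs
begin

text \<open>
  Let P_m(x) be the sum of (m choose i mod 2) x^i, so that c m = P_m(2). The parity of
  binomial coefficients gives P_2m(x) = P_m(x^2) and P_2m+1(x) = (1 + x) P_m(x^2).
  Unwinding the last three binary digits of 8n+4 and 8n+2 yields c(8n+4) = 17 p and
  c(8n+2) = 5 p with the same p = P_n(256). Hence the ratio in question is (17p - 1)/(5p - 1),
  and p >= 256^n tends to infinity.
\<close>

lemma even_choose_add2:
  "even (n + 2 choose (k + 2)) \<longleftrightarrow> even ((n choose (k + 2)) + (n choose k))"
proof -
  have "(n + 2 choose (k + 2)) = (n choose (k + 2)) + (n choose k) + 2 * (n choose (k + 1))"
    by (simp add: numeral_2_eq_2)
  then show ?thesis by auto
qed

lemma mod2_eq_iff_even: "(a::nat) mod 2 = b mod 2 \<longleftrightarrow> (even a \<longleftrightarrow> even b)"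
  by (auto simp: mod2_eq_if)

lemma even_choose_double:
  "even (2 * m choose (2 * k + 1)) \<and> (even (2 * m choose (2 * k)) \<longleftrightarrow> even (m choose k))"
proof (induction m arbitrary: k)
  case 0
  then show ?case by (cases k) auto
next
  case (Suc m)
  show ?case
  proof (cases k)
    case (Suc j)
    have "2 * Suc m = 2 * m + 2" "2 * k + 1 = (2 * j + 1) + 2" "2 * k = 2 * j + 2"
      using Suc by simp_all
    then show ?thesis
      using even_choose_add2[of "2 * m" "2 * j + 1"] even_choose_add2[of "2 * m" "2 * j"]
        Suc.IH[of j] Suc.IH[of "j + 1"] Suc
      by (simp add: algebra_simps)
  qed simp
qed

lemma binomial_double_mod2:
  "(2 * m choose (2 * k + 1)) mod 2 = 0"
  "(2 * m choose (2 * k)) mod 2 = (m choose k) mod 2"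
  using even_choose_double[of m k] by (simp_all add: mod2_eq_iff_even)

lemma binomial_double_Suc_mod2:
  "(2 * m + 1 choose (2 * k)) mod 2 = (m choose k) mod 2"
  "(2 * m + 1 choose (2 * k + 1)) mod 2 = (m choose k) mod 2"
proof -
  have "even (2 * m + 1 choose (2 * k)) \<longleftrightarrow> even (m choose k)"
    using even_choose_double[of m k] even_choose_double[of m "k - 1"]
    by (cases k) simp_all
  moreover have "even (2 * m + 1 choose (2 * k + 1)) \<longleftrightarrow> even (m choose k)"
    using even_choose_double[of m k] by simp
  ultimately show
    "(2 * m + 1 choose (2 * k)) mod 2 = (m choose k) mod 2"
    "(2 * m + 1 choose (2 * k + 1)) mod 2 = (m choose k) mod 2"
    by (simp_all only: mod2_eq_iff_even)
qed

definition pascal_mod2_poly :: "nat \<Rightarrow> nat \<Rightarrow> nat" where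
  "pascal_mod2_poly m x = (\<Sum>i\<le>m. ((m choose i) mod 2) * x ^ i)"

lemma c_eq_pascal_mod2_poly: "c n = pascal_mod2_poly n 2"
  by (simp add: c_def pascal_mod2_poly_def atLeast0AtMost)

lemma pascal_mod2_poly_double:
  "pascal_mod2_poly (2 * m) x = pascal_mod2_poly m (x ^ 2)"
proof -
  have "pascal_mod2_poly (2 * m) x = (\<Sum>i\<le>Suc (2 * m). ((2 * m choose i) mod 2) * x ^ i)"
    by (simp add: pascal_mod2_poly_def binomial_eq_0)
  also have "\<dots> = pascal_mod2_poly m (x ^ 2)"
    unfolding sum.in_pairs_0 pascal_mod2_poly_def
    using binomial_double_mod2 by (intro sum.cong) (auto simp: power_mult)
  finally show ?thesis .
qed

lemma pascal_mod2_poly_double_Suc: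
  "pascal_mod2_poly (2 * m + 1) x = (1 + x) * pascal_mod2_poly m (x ^ 2)"
  unfolding pascal_mod2_poly_def Suc_eq_plus1[symmetric] sum.in_pairs_0 sum_distrib_left
  using binomial_double_Suc_mod2
  by (intro sum.cong) (auto simp: power_mult[symmetric] mult.commute[of 2] algebra_simps)

lemma pascal_mod2_poly_mod: "pascal_mod2_poly m x mod x = 1 mod x"
proof -
  have "pascal_mod2_poly m x = 1 + (\<Sum>i<m. ((m choose Suc i) mod 2) * x ^ Suc i)"
    unfolding pascal_mod2_poly_def by (simp add: sum.atMost_shift)
  also have "\<dots> = 1 + x * (\<Sum>i<m. ((m choose Suc i) mod 2) * x ^ i)"
    by (simp add: sum_distrib_left algebra_simps)
  finally show ?thesis
    by (simp only: mod_mult_self2)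
qed

lemma pascal_mod2_poly_ge_power: "x ^ m \<le> pascal_mod2_poly m x"
proof -
  have "((m choose m) mod 2) * x ^ m \<le> pascal_mod2_poly m x"
    unfolding pascal_mod2_poly_def by (rule member_le_sum) auto
  then show ?thesis by simp
qed

lemma c_double_mod4: "c (2 * m) mod 4 = 1"
proof -
  have "c (2 * m) = pascal_mod2_poly m 4"
    unfolding c_eq_pascal_mod2_poly pascal_mod2_poly_double by simp
  then show ?thesis
    using pascal_mod2_poly_mod[of m 4] by simp
qed

lemma c_double_eq: "c (2 * m) = 4 * l m + 1"
  using c_double_mod4[of m] unfolding l_def by presburger

lemma c_8n_4: "c (8 * n + 4) = 17 * pascal_mod2_poly n 256"
proof -
  have "8 * n + 4 = 2 * (2 * (2 * n + 1))"
    by simp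
  then show ?thesis
    by (simp only: c_eq_pascal_mod2_poly pascal_mod2_poly_double pascal_mod2_poly_double_Suc) simp
qed

lemma c_8n_2: "c (8 * n + 2) = 5 * pascal_mod2_poly n 256"
proof -
  have "8 * n + 2 = 2 * (2 * (2 * n) + 1)"
    by simp
  then show ?thesis
    by (simp only: c_eq_pascal_mod2_poly pascal_mod2_poly_double pascal_mod2_poly_double_Suc) simp
qed

lemma l_4n_2: "4 * l (4 * n + 2) + 1 = 17 * pascal_mod2_poly n 256"
proof -
  have "2 * (4 * n + 2) = 8 * n + 4"
    by simp
  then show ?thesis
    using c_double_eq[of "4 * n + 2"] c_8n_4[of n] by metis
qed

lemma l_4n_1: "4 * l (4 * n + 1) + 1 = 5 * pascal_mod2_poly n 256"
proof -
  have "2 * (4 * n + 1) = 8 * n + 2"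
    by simp
  then show ?thesis
    using c_double_eq[of "4 * n + 1"] c_8n_2[of n] by metis
qed

lemma tendsto_affine_ratio_at_top:
  fixes f :: "'a \<Rightarrow> real"
  assumes "filterlim f at_top F" and "b \<noteq> 0"
  shows "((\<lambda>x. (a * f x - 1) / (b * f x - 1)) \<longlongrightarrow> a / b) F"
proof -
  have inverse_form: "(a - inverse t) / (b - inverse t) = (a * t - 1) / (b * t - 1)" if "t > 0" for t
  proof -
    have "a - inverse t = (a * t - 1) / t" "b - inverse t = (b * t - 1) / t"
      using that by (simp_all add: field_simps)
    then show ?thesis
      using that by simp
  qed
  have "((\<lambda>x. (a - inverse (f x)) / (b - inverse (f x))) \<longlongrightarrow> (a - 0) / (b - 0)) F"
    using tendsto_inverse_0_at_top[OF assms(1)] assms(2)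
    by (intro tendsto_intros) auto
  moreover have "\<forall>\<^sub>F x in F. 0 < f x"
    using assms(1) by (simp add: filterlim_at_top_dense)
  then have "\<forall>\<^sub>F x in F. (a - inverse (f x)) / (b - inverse (f x)) = (a * f x - 1) / (b * f x - 1)"
    by (rule eventually_mono) (rule inverse_form)
  ultimately show ?thesis
    by (simp add: tendsto_cong)
qed

theorem mainTheorem11:
  shows "(\<lambda>n. real (l (4 * n + 2)) / real (l (4 * n + 1))) \<longlonglongrightarrow> 17 / 5"
proof -
  define p where "p n = real (pascal_mod2_poly n 256)" for n
  have ratio: "real (l (4 * n + 2)) / real (l (4 * n + 1)) = (17 * p n - 1) / (5 * p n - 1)" for n
  proof -
    have "real (l (4 * n + 2)) = (17 * p n - 1) / 4" "real (l (4 * n + 1)) = (5 * p n - 1) / 4"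
      using arg_cong[where f = real, OF l_4n_2[of n]] arg_cong[where f = real, OF l_4n_1[of n]]
      by (simp_all add: p_def field_simps)
    moreover have "(x / 4) / (y / 4) = x / y" for x y :: real
      by simp
    ultimately show ?thesis
      by (simp only:)
  qed
  have "real n \<le> p n" for n
    using power_gt_expt[of 256 n] pascal_mod2_poly_ge_power[of 256 n]
    unfolding p_def by linarith
  then have "filterlim p at_top sequentially"
    by (intro filterlim_at_top_mono[OF filterlim_real_sequentially]) auto
  then show ?thesis
    unfolding ratio using tendsto_affine_ratio_at_top[of p sequentially 5 17] by simp
qed

end
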